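(* Let $M\in\mathbb Z$, $s\in\{0,\dots,NL-1\}$ with $M\equiv s\bmod NL$, and $d,l$ non-negative integers with $l\ge d$. Then the linear map $\varrho^d_l:V^d_{s+lNL}\to\mathcal F^d_M$, $w\mapsto w\wedge|M-s-lNL\rangle$, is an isomorphism of vector spaces.
   Context: $N,L\ge2$. $V_{\rm aff}=\mathbb C[z,z^{-1}]\otimes\mathbb C^L\otimes\mathbb C^N$ with basis $u_k=z^{\underline k}\otimes\mathfrak v_{\dot k}\otimes\mathfrak u_{\bar k}$ ($k\in\mathbb Z$), where $k=\bar k-N(\dot k+L\underline k)$ uniquely with $\bar k\in\{1..N\}$, $\dot k\in\{1..L\}$, $\underline k\in\mathbb Z$. Wedges are antisymmetric; normally ordered wedges ($k_1>k_2>\cdots$) form bases. $\mathcal F_M$ has basis the normally ordered semi-infinite wedges $u_{k_1}\wedge u_{k_2}\wedge\cdots$ with $k_i=o_i:=M-i+1$ for all but finitely many $i$; $|K\rangle=u_K\wedge u_{K-1}\wedge\cdots$. Its degree is $\sum_i(\underline{o_i}-\underline{k_i})$ and $\mathcal F_M^d$ is the span of degree-$d$ wedges. $V_{s+lNL}$ is the span of normally ordered finite wedges $u_{k_1}\wedge\cdots\wedge u_{k_{s+lNL}}$ with $\underline{k_{s+lNL}}\le\underline{o_{s+lNL}}$ (with $V_0=\mathbb C$), graded by degree $\sum_{i=1}^{s+lNL}(\underline{o_i}-\underline{k_i})$; $V^d_{s+lNL}$ is the degree-$d$ component. *)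

theory Defs
  imports Complex_Main "HOL-Number_Theory.Cong"
begin

text \<open>Index decomposition k = kbar - N (kdot + L kund), kbar in 1..N, kdot in 1..L.
  ul N L k is the integer kund (underline k).\<close>
definition ul :: "nat \<Rightarrow> nat \<Rightarrow> int \<Rightarrow> int" where
  "ul N L k = (THE u. \<exists>b t. 1 \<le> b \<and> b \<le> int N \<and> 1 \<le> t \<and> t \<le> int L
                      \<and> k = b - int N * (t + int L * u))"

text \<open>Finite wedges u_{k_1} ^ ... ^ u_{k_n} are represented by the index list [k_1,...,k_n]
  (0-based positions, so o_{i+1} = M - i).  Basis of V^d_n (n = s + l N L).\<close>
definition fin_basis :: "nat \<Rightarrow> nat \<Rightarrow> int \<Rightarrow> nat \<Rightarrow> int \<Rightarrow> int list \<Rightarrow> bool" where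
  "fin_basis N L M n d ks \<longleftrightarrow>
     length ks = n \<and> sorted_wrt (>) ks \<and>
     (n > 0 \<longrightarrow> ul N L (ks ! (n - 1)) \<le> ul N L (M - int (n - 1))) \<and>
     (\<Sum>i<n. ul N L (M - int i) - ul N L (ks ! i)) = d"

text \<open>Semi-infinite wedges u_{c 0} ^ u_{c 1} ^ ... are represented by index sequences c.
  Basis of F^d_M: normally ordered, c i = o_{i+1} = M - i for all but finitely many i.\<close>
definition semi_basis :: "nat \<Rightarrow> nat \<Rightarrow> int \<Rightarrow> int \<Rightarrow> (nat \<Rightarrow> int) \<Rightarrow> bool" where
  "semi_basis N L M d c \<longleftrightarrow>
     (\<forall>i j. i < j \<longrightarrow> c j < c i) \<and> finite {i. c i \<noteq> M - int i} \<and>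
     (\<Sum>i\<in>{i. c i \<noteq> M - int i}. ul N L (M - int i) - ul N L (c i)) = d"

definition Vsp :: "nat \<Rightarrow> nat \<Rightarrow> int \<Rightarrow> nat \<Rightarrow> int \<Rightarrow> (int list \<Rightarrow> complex) set" where
  "Vsp N L M n d = {v. finite {x. v x \<noteq> 0} \<and> (\<forall>x. v x \<noteq> 0 \<longrightarrow> fin_basis N L M n d x)}"

definition Fsp :: "nat \<Rightarrow> nat \<Rightarrow> int \<Rightarrow> int \<Rightarrow> ((nat \<Rightarrow> int) \<Rightarrow> complex) set" where
  "Fsp N L M d = {v. finite {x. v x \<noteq> 0} \<and> (\<forall>x. v x \<noteq> 0 \<longrightarrow> semi_basis N L M d x)}"

text \<open>Antisymmetric semi-infinite wedge of an arbitrary index sequence c, expressed in the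
  normally ordered basis: zero if an index repeats, otherwise the sign of the sorting
  permutation times the decreasingly sorted wedge.\<close>
definition sorted_seq :: "(nat \<Rightarrow> int) \<Rightarrow> nat \<Rightarrow> int" where
  "sorted_seq c i = (THE x. x \<in> range c \<and> card {y \<in> range c. x < y} = i)"

definition inversions :: "(nat \<Rightarrow> int) \<Rightarrow> nat" where
  "inversions c = card {(i, j). i < j \<and> c i < c j}"

definition swedge :: "(nat \<Rightarrow> int) \<Rightarrow> (nat \<Rightarrow> int) \<Rightarrow> complex" where
  "swedge c = (if inj c then (\<lambda>b. if b = sorted_seq c then (-1) ^ inversions c else 0)
               else (\<lambda>b. 0))"

text \<open>Index sequence of u_{k_1} ^ ... ^ u_{k_n} ^ |K>, where |K> = u_K ^ u_{K-1} ^ ...\<close>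
definition cat_vac :: "int list \<Rightarrow> int \<Rightarrow> nat \<Rightarrow> int" where
  "cat_vac ks K i = (if i < length ks then ks ! i else K - int (i - length ks))"

definition rho :: "int \<Rightarrow> nat \<Rightarrow> (int list \<Rightarrow> complex) \<Rightarrow> (nat \<Rightarrow> int) \<Rightarrow> complex" where
  "rho M n w = (\<lambda>b. \<Sum>ks\<in>{x. w x \<noteq> 0}. w ks * swedge (cat_vac ks (M - int n)) b)"

end

theory Submission
  imports Defs
begin

text \<open>
  Since \<open>ul N L k = (-k) div (N L)\<close>, the block index drops exactly when \<open>k\<close> crosses a
  multiple of \<open>N L\<close>. A normally ordered semi-infinite wedge of degree \<open>d \<le> l\<close> agrees
  with the vacuum from position \<open>s + l N L\<close> on: otherwise, being strictly decreasing, it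
  would lie strictly above the vacuum at the \<open>l + 1\<close> positions \<open>s + t N L\<close> (\<open>t \<le> l\<close>),
  where the vacuum index \<open>M - s - t N L\<close> is a multiple of \<open>N L\<close>, and each of these
  positions costs at least one unit of degree. Conversely, the condition on the last index of
  a finite wedge makes \<open>w \<and> |M - s - l N L\<rangle>\<close> normally ordered. Hence \<open>\<varrho>\<close> maps the
  wedge basis of \<open>V\<close> bijectively onto that of \<open>F\<close>.
\<close>

section \<open>Finitely supported coefficient functions\<close>

definition finsupp_on :: "'a set \<Rightarrow> ('a \<Rightarrow> 'b::zero) set" where
  "finsupp_on A = {v. finite {x. v x \<noteq> 0} \<and> (\<forall>x. v x \<noteq> 0 \<longrightarrow> x \<in> A)}"

definition push_coeffs :: "('a \<Rightarrow> 'c) \<Rightarrow> 'a set \<Rightarrow> ('a \<Rightarrow> 'b::zero) \<Rightarrow> 'c \<Rightarrow> 'b" where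
  "push_coeffs e A v y = (if y \<in> e ` A then v (the_inv_into A e y) else 0)"

lemma finsupp_on_lincomb:
  fixes v w :: "'a \<Rightarrow> 'b::semiring_0"
  assumes "v \<in> finsupp_on A" "w \<in> finsupp_on A"
  shows "(\<lambda>x. a * v x + w x) \<in> finsupp_on A"
proof -
  have "{x. a * v x + w x \<noteq> 0} \<subseteq> {x. v x \<noteq> 0} \<union> {x. w x \<noteq> 0}" by auto
  then show ?thesis using assms by (auto simp: finsupp_on_def intro: finite_subset)
qed

lemma push_coeffs_lincomb:
  fixes v w :: "'a \<Rightarrow> 'b::semiring_0"
  shows "push_coeffs e A (\<lambda>x. a * v x + w x) = (\<lambda>y. a * push_coeffs e A v y + push_coeffs e A w y)"
  by (simp add: push_coeffs_def fun_eq_iff)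

lemma push_coeffs_in_finsupp_on:
  assumes "inj_on e A" "v \<in> finsupp_on A"
  shows "push_coeffs e A v \<in> finsupp_on (e ` A)"
proof -
  have "{y. push_coeffs e A v y \<noteq> 0} \<subseteq> e ` {x. v x \<noteq> 0}"
    using assms by (auto simp: push_coeffs_def the_inv_into_f_f)
  then have "finite {y. push_coeffs e A v y \<noteq> 0}"
    using assms(2) finite_subset by (auto simp: finsupp_on_def)
  moreover have "y \<in> e ` A" if "push_coeffs e A v y \<noteq> 0" for y
    using that by (simp add: push_coeffs_def split: if_splits)
  ultimately show ?thesis by (simp add: finsupp_on_def)
qed

lemma bij_betw_push_coeffs:
  assumes inj: "inj_on e A"
  shows "bij_betw (push_coeffs e A) (finsupp_on A) (finsupp_on (e ` A))"
proof (rule bij_betw_imageI)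
  show "inj_on (push_coeffs e A) (finsupp_on A)"
  proof (rule inj_onI)
    fix v w
    assume v: "v \<in> finsupp_on A" and w: "w \<in> finsupp_on A"
      and eq: "push_coeffs e A v = push_coeffs e A w"
    show "v = w"
    proof
      fix x
      show "v x = w x"
      proof (cases "x \<in> A")
        case True
        then show ?thesis
          using fun_cong[OF eq, of "e x"] inj by (simp add: push_coeffs_def the_inv_into_f_f)
      next
        case False
        then have "v x = 0" "w x = 0" using v w unfolding finsupp_on_def by blast+
        then show ?thesis by simp
      qed
    qed
  qed
  show "push_coeffs e A ` finsupp_on A = finsupp_on (e ` A)"
  proof (intro subset_antisym subsetI)
    fix u
    assume "u \<in> push_coeffs e A ` finsupp_on A"
    then show "u \<in> finsupp_on (e ` A)" using push_coeffs_in_finsupp_on[OF inj] by blast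
  next
    fix u
    assume u: "u \<in> finsupp_on (e ` A)"
    define v where "v x = (if x \<in> A then u (e x) else 0)" for x
    have "{x. v x \<noteq> 0} = e -` {y. u y \<noteq> 0} \<inter> A" by (auto simp: v_def)
    moreover have "finite (e -` {y. u y \<noteq> 0} \<inter> A)"
      using u inj by (intro finite_vimage_IntI) (simp_all add: finsupp_on_def)
    ultimately have "v \<in> finsupp_on A" by (simp add: finsupp_on_def v_def)
    moreover have "push_coeffs e A v = u"
      using u inj by (auto simp: fun_eq_iff push_coeffs_def v_def finsupp_on_def the_inv_into_f_f)
    ultimately show "u \<in> push_coeffs e A ` finsupp_on A" by blast
  qed
qed

lemma sum_indicator_eq_push_coeffs:
  fixes v :: "'a \<Rightarrow> 'b::semiring_1"
  assumes inj: "inj_on e A" and v: "v \<in> finsupp_on A"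
  shows "(\<Sum>x\<in>{x. v x \<noteq> 0}. v x * (if y = e x then 1 else 0)) = push_coeffs e A v y"
proof (cases "y \<in> e ` A")
  case True
  then obtain x0 where x0: "x0 \<in> A" "y = e x0" by blast
  have "(\<Sum>x\<in>{x. v x \<noteq> 0}. v x * (if y = e x then 1 else 0))
      = (\<Sum>x\<in>{x. v x \<noteq> 0}. if x = x0 then v x else 0)"
    using v x0 inj by (intro sum.cong) (auto simp: finsupp_on_def inj_on_eq_iff)
  also have "\<dots> = v x0" using v by (simp add: finsupp_on_def)
  also have "\<dots> = push_coeffs e A v y" using x0 inj by (simp add: push_coeffs_def the_inv_into_f_f)
  finally show ?thesis .
next
  case False
  then have "y \<noteq> e x" if "v x \<noteq> 0" for x using v that by (auto simp: finsupp_on_def)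
  then show ?thesis using False by (simp add: push_coeffs_def)
qed

section \<open>The block index \<open>ul\<close>\<close>

lemma ul_eq_div:
  assumes "N \<ge> 1" "L \<ge> 1"
  shows "ul N L k = (-k) div (int N * int L)"
  unfolding ul_def
proof (rule the_equality)
  define P where "P = int N * int L"
  define r where "r = (-k) mod P"
  have P: "P > 0" using assms by (simp add: P_def)
  have r: "0 \<le> r" "r < P" using P by (simp_all add: r_def)
  have "r div int N * int N \<le> r"
    using assms by (simp add: minus_mod_eq_div_mult [symmetric])
  then have "r div int N * int N < int L * int N"
    using r by (simp add: P_def mult.commute)
  then have "r div int N < int L"
    by (rule mult_right_less_imp_less) simp
  moreover have "0 \<le> r div int N" using r by (simp add: div_int_pos_iff)
  moreover have "k = (int N - r mod int N) - int N * ((r div int N + 1) + int L * ((-k) div P))"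
  proof -
    have "-k = P * ((-k) div P) + int N * (r div int N) + r mod int N"
      by (simp add: r_def)
    then show ?thesis by (simp add: P_def algebra_simps)
  qed
  moreover have "0 \<le> r mod int N" "r mod int N < int N" using assms by simp_all
  ultimately show "\<exists>b t. 1 \<le> b \<and> b \<le> int N \<and> 1 \<le> t \<and> t \<le> int L
      \<and> k = b - int N * (t + int L * ((-k) div (int N * int L)))"
    by (fold P_def, intro exI conjI) auto
next
  fix u
  assume "\<exists>b t. 1 \<le> b \<and> b \<le> int N \<and> 1 \<le> t \<and> t \<le> int L \<and> k = b - int N * (t + int L * u)"
  then obtain b t where bt: "1 \<le> b" "b \<le> int N" "1 \<le> t" "t \<le> int L"
    and k: "k = b - int N * (t + int L * u)" by blast
  have "int N * 1 \<le> int N * t" "int N * t \<le> int N * int L"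
    using bt by (simp_all add: mult_left_mono)
  then have "0 \<le> int N * t - b" "int N * t - b < int N * int L"
    using bt by linarith+
  moreover have "-k = (int N * int L) * u + (int N * t - b)" by (simp add: k algebra_simps)
  ultimately show "u = (-k) div (int N * int L)"
    by (simp add: int_div_pos_eq)
qed

lemma ul_antimono:
  assumes "N \<ge> 1" "L \<ge> 1" "k \<le> k'"
  shows "ul N L k' \<le> ul N L k"
  using assms by (simp add: ul_eq_div zdiv_mono1)

lemma ul_less_of_dvd:
  assumes "N \<ge> 1" "L \<ge> 1" "int N * int L dvd x" "x < k"
  shows "ul N L k < ul N L x"
proof -
  define P where "P = int N * int L"
  have P: "P > 0" using assms by (simp add: P_def)
  obtain m where x: "x = P * m" using assms by (auto simp: P_def)
  have "ul N L x = -(P * m) div P"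
    using assms by (simp add: ul_eq_div x P_def)
  also have "\<dots> = -m"
    using P by (intro int_div_pos_eq[where r = 0]) simp_all
  finally have "ul N L x = -m" .
  moreover have "(-x - 1) div P = -m - 1"
    using P by (intro int_div_pos_eq[where r = "P - 1"]) (simp_all add: x algebra_simps)
  moreover have "ul N L k \<le> (-x - 1) div P"
    using assms P by (simp add: ul_eq_div zdiv_mono1 flip: P_def)
  ultimately show ?thesis by simp
qed

section \<open>Normally ordered wedges\<close>

lemma strict_dec_add_le:
  fixes c :: "nat \<Rightarrow> int"
  assumes dec: "\<forall>i j. i < j \<longrightarrow> c j < c i" and "i \<le> j"
  shows "c j + int (j - i) \<le> c i"
  using \<open>i \<le> j\<close>
proof (induction j rule: dec_induct)
  case base
  show ?case by simp
next
  case (step j)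
  then show ?case using dec[rule_format, of j "Suc j"] by (simp add: Suc_diff_le)
qed

lemma strict_dec_less_iff:
  fixes c :: "nat \<Rightarrow> int"
  assumes "\<forall>i j. i < j \<longrightarrow> c j < c i"
  shows "c i < c j \<longleftrightarrow> j < i"
  using assms by (metis less_asym' linorder_cases)

lemma strict_dec_inj:
  fixes c :: "nat \<Rightarrow> int"
  assumes "\<forall>i j. i < j \<longrightarrow> c j < c i"
  shows "inj c"
  using assms by (metis injI less_irrefl linorder_cases)

lemma sorted_seq_strict_dec:
  fixes c :: "nat \<Rightarrow> int"
  assumes dec: "\<forall>i j. i < j \<longrightarrow> c j < c i"
  shows "sorted_seq c = c"
proof
  have above: "card {y \<in> range c. c j < y} = j" for j
  proof -
    have "{y \<in> range c. c j < y} = c ` {..<j}"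
      using strict_dec_less_iff[OF dec] by auto
    then show ?thesis
      using strict_dec_inj[OF dec] by (simp add: card_image inj_on_subset)
  qed
  fix i
  show "sorted_seq c i = c i"
    unfolding sorted_seq_def by (rule the_equality) (auto simp: above)
qed

lemma swedge_strict_dec:
  fixes c :: "nat \<Rightarrow> int"
  assumes dec: "\<forall>i j. i < j \<longrightarrow> c j < c i"
  shows "swedge c = (\<lambda>b. if b = c then 1 else 0)"
proof -
  have no_inversion: "{(i, j). i < j \<and> c i < c j} = {}"
    using strict_dec_less_iff[OF dec] by auto
  have "inversions c = 0"
    unfolding inversions_def no_inversion by simp
  then show ?thesis
    unfolding swedge_def sorted_seq_strict_dec[OF dec] \<open>inversions c = 0\<close>
    using strict_dec_inj[OF dec] by (simp only: if_True power_0)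
qed

lemma deviations_subset_vacuum_tail:
  "\<forall>i\<ge>n. c i = M - int i \<Longrightarrow> {i. c i \<noteq> M - int i} \<subseteq> {..<n}"
  by (auto simp: not_le[symmetric])

lemma sum_deviations_vacuum_tail:
  fixes g :: "int \<Rightarrow> int"
  assumes "\<forall>i\<ge>n. c i = M - int i"
  shows "(\<Sum>i\<in>{i. c i \<noteq> M - int i}. g (M - int i) - g (c i))
       = (\<Sum>i<n. g (M - int i) - g (c i))"
  using deviations_subset_vacuum_tail[OF assms] by (intro sum.mono_neutral_left) auto

lemma map_cat_vac: "map (cat_vac ks K) [0..<length ks] = ks"
  by (intro nth_equalityI) (simp_all add: cat_vac_def)

lemma cat_vac_vacuum:
  "length ks = n \<Longrightarrow> n \<le> i \<Longrightarrow> cat_vac ks (M - int n) i = M - int i"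
  by (simp add: cat_vac_def)

lemma cat_vac_map:
  "\<forall>i\<ge>n. c i = M - int i \<Longrightarrow> cat_vac (map c [0..<n]) (M - int n) = c"
  by (auto simp: cat_vac_def fun_eq_iff)

lemma inj_on_cat_vac_fin_basis: "inj_on (\<lambda>ks. cat_vac ks K) {ks. fin_basis N L M n d ks}"
  by (rule inj_onI) (metis fin_basis_def map_cat_vac mem_Collect_eq)

lemma cat_vac_strict_dec:
  assumes "sorted_wrt (>) ks" "\<forall>k\<in>set ks. K < k"
  shows "\<forall>i j. i < j \<longrightarrow> cat_vac ks K j < cat_vac ks K i"
proof (intro allI impI)
  fix i j :: nat
  assume "i < j"
  have "K < ks ! i" if "i < length ks"
    using assms(2) nth_mem[OF that] by blast
  then show "cat_vac ks K j < cat_vac ks K i"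
    using assms(1) \<open>i < j\<close> by (auto simp: cat_vac_def sorted_wrt_iff_nth_less)
qed

lemma semi_basis_ge:
  assumes "semi_basis N L M d c"
  shows "M - int i \<le> c i"
proof -
  have dec: "\<forall>i j. i < j \<longrightarrow> c j < c i" and fin: "finite {i. c i \<noteq> M - int i}"
    using assms by (auto simp: semi_basis_def)
  obtain m where m: "\<forall>j\<in>{i. c i \<noteq> M - int i}. j \<le> m"
    using fin finite_nat_set_iff_bounded_le by blast
  define j where "j = max i (Suc m)"
  have "c j = M - int j" using m unfolding j_def by fastforce
  moreover have "c j + int (j - i) \<le> c i" using strict_dec_add_le[OF dec] by (simp add: j_def)
  ultimately show ?thesis by (simp add: j_def)
qed

lemma fin_basis_gt:
  assumes N: "N \<ge> 1" and L: "L \<ge> 1" and dvd: "int N * int L dvd M - int n"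
    and fb: "fin_basis N L M n d ks" and k: "k \<in> set ks"
  shows "M - int n < k"
proof -
  have len: "length ks = n" and sorted: "sorted_wrt (>) ks"
    and last: "n > 0 \<longrightarrow> ul N L (ks ! (n - 1)) \<le> ul N L (M - int (n - 1))"
    using fb by (auto simp: fin_basis_def)
  obtain i where i: "i < n" "k = ks ! i" using k len by (auto simp: in_set_conv_nth)
  have "M - int n < ks ! (n - 1)"
  proof (rule ccontr)
    assume "\<not> ?thesis"
    then have "ul N L (M - int n) \<le> ul N L (ks ! (n - 1))"
      using ul_antimono[OF N L] by simp
    moreover have "ul N L (M - int (n - 1)) < ul N L (M - int n)"
      using ul_less_of_dvd[OF N L dvd] i by (simp add: of_nat_diff)
    ultimately show False using last i by simp
  qed
  moreover have "ks ! (n - 1) \<le> ks ! i"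
  proof (cases "i = n - 1")
    case False
    then have "i < n - 1" using i by simp
    then show ?thesis using sorted_wrt_nth_less[OF sorted] len i by fastforce
  qed simp
  ultimately show ?thesis using i by simp
qed

lemma semi_basis_cat_vac_iff:
  assumes N: "N \<ge> 1" and L: "L \<ge> 1" and dvd: "int N * int L dvd M - int n"
    and len: "length ks = n"
  shows "semi_basis N L M d (cat_vac ks (M - int n)) \<longleftrightarrow> fin_basis N L M n d ks"
proof -
  define c where "c = cat_vac ks (M - int n)"
  have tail: "\<forall>i\<ge>n. c i = M - int i" using cat_vac_vacuum[OF len] by (simp add: c_def)
  have prefix: "c i = ks ! i" if "i < n" for i using that len by (simp add: c_def cat_vac_def)
  have "finite {i. c i \<noteq> M - int i}"
    using finite_subset[OF deviations_subset_vacuum_tail[OF tail]] by simp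
  moreover have "(\<Sum>i\<in>{i. c i \<noteq> M - int i}. ul N L (M - int i) - ul N L (c i))
      = (\<Sum>i<n. ul N L (M - int i) - ul N L (ks ! i))"
    using sum_deviations_vacuum_tail[OF tail] prefix by simp
  moreover have "(\<forall>i j. i < j \<longrightarrow> c j < c i) \<longleftrightarrow>
      sorted_wrt (>) ks \<and> (n > 0 \<longrightarrow> ul N L (ks ! (n - 1)) \<le> ul N L (M - int (n - 1)))"
    if "(\<Sum>i<n. ul N L (M - int i) - ul N L (ks ! i)) = d"
  proof
    assume dec: "\<forall>i j. i < j \<longrightarrow> c j < c i"
    have "sorted_wrt (>) ks"
      unfolding sorted_wrt_iff_nth_less
    proof (intro allI impI)
      fix i j
      assume "i < j" "j < length ks"
      then show "ks ! j < ks ! i" using dec[rule_format, of i j] prefix[of i] prefix[of j] len by auto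
    qed
    moreover have "ul N L (ks ! (n - 1)) \<le> ul N L (M - int (n - 1))" if "n > 0"
    proof -
      have "c n < c (n - 1)" using dec that by simp
      then have "M - int (n - 1) \<le> ks ! (n - 1)"
        using tail prefix[of "n - 1"] that by (simp add: of_nat_diff)
      then show ?thesis by (rule ul_antimono[OF N L])
    qed
    ultimately show "sorted_wrt (>) ks \<and> (n > 0 \<longrightarrow> ul N L (ks ! (n - 1)) \<le> ul N L (M - int (n - 1)))"
      by blast
  next
    assume "sorted_wrt (>) ks \<and> (n > 0 \<longrightarrow> ul N L (ks ! (n - 1)) \<le> ul N L (M - int (n - 1)))"
    then have "fin_basis N L M n d ks"
      using that len by (simp add: fin_basis_def)
    then show "\<forall>i j. i < j \<longrightarrow> c j < c i"
      unfolding c_def using fin_basis_gt[OF N L dvd] fin_basis_def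
      by (intro cat_vac_strict_dec) auto
  qed
  ultimately show ?thesis
    unfolding semi_basis_def fin_basis_def by (auto simp: len simp flip: c_def)
qed

lemma dvd_diff_add_mult:
  assumes "int N * int L dvd M - int s"
  shows "int N * int L dvd M - int (s + l * N * L)"
proof -
  have "M - int (s + l * N * L) = (M - int s) - int N * int L * int l" by (simp add: algebra_simps)
  then show ?thesis by (metis assms dvd_diff dvd_triv_left)
qed

lemma semi_basis_vacuum_tail:
  assumes N: "N \<ge> 1" and L: "L \<ge> 1" and dvd: "int N * int L dvd M - int s"
    and sb: "semi_basis N L M d c" and d: "d \<le> int l" and i: "s + l * N * L \<le> i"
  shows "c i = M - int i"
proof (rule ccontr)
  assume "c i \<noteq> M - int i"
  then have ci: "M - int i < c i" using semi_basis_ge[OF sb, of i] by simp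
  have dec: "\<forall>i j. i < j \<longrightarrow> c j < c i" and fin: "finite {i. c i \<noteq> M - int i}"
    and sum: "(\<Sum>i\<in>{i. c i \<noteq> M - int i}. ul N L (M - int i) - ul N L (c i)) = d"
    using sb by (auto simp: semi_basis_def)
  define f where "f j = ul N L (M - int j) - ul N L (c j)" for j
  define J where "J = (\<lambda>t. s + t * N * L) ` {..l}"
  have f_nonneg: "0 \<le> f j" for j
    using ul_antimono[OF N L semi_basis_ge[OF sb]] by (simp add: f_def)
  have J_deviation: "j \<in> {i. c i \<noteq> M - int i} \<and> 1 \<le> f j" if "j \<in> J" for j
  proof -
    obtain t where t: "t \<le> l" "j = s + t * N * L" using \<open>j \<in> J\<close> by (auto simp: J_def)
    have "t * N * L \<le> l * N * L" using t by (simp add: mult_right_mono)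
    then have "j \<le> i" using i t by linarith
    then have "c i + int (i - j) \<le> c j" by (rule strict_dec_add_le[OF dec])
    then have cj: "M - int j < c j" using ci \<open>j \<le> i\<close> by (simp add: of_nat_diff)
    have "int N * int L dvd M - int j" using dvd_diff_add_mult[OF dvd] t by simp
    from ul_less_of_dvd[OF N L this cj] cj show ?thesis by (simp add: f_def)
  qed
  have "card J = Suc l"
    using N L by (simp add: J_def card_image inj_on_def)
  then have "int (Suc l) = (\<Sum>j\<in>J. 1)" by simp
  also have "\<dots> \<le> sum f J" using J_deviation by (intro sum_mono) auto
  also have "\<dots> \<le> sum f {i. c i \<noteq> M - int i}"
    using fin J_deviation f_nonneg by (intro sum_mono2) auto
  also have "\<dots> = d" using sum by (simp add: f_def)
  finally show False using d by simp
qed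

lemma cat_vac_image_fin_basis:
  assumes N: "N \<ge> 1" and L: "L \<ge> 1" and dvd: "int N * int L dvd M - int s" and d: "d \<le> int l"
  defines "n \<equiv> s + l * N * L"
  shows "(\<lambda>ks. cat_vac ks (M - int n)) ` {ks. fin_basis N L M n d ks} = {c. semi_basis N L M d c}"
proof -
  have dvd_n: "int N * int L dvd M - int n" using dvd_diff_add_mult[OF dvd] by (simp add: n_def)
  show ?thesis
  proof (intro set_eqI iffI)
    fix c
    assume "c \<in> (\<lambda>ks. cat_vac ks (M - int n)) ` {ks. fin_basis N L M n d ks}"
    then obtain ks where "fin_basis N L M n d ks" "c = cat_vac ks (M - int n)" by blast
    then show "c \<in> {c. semi_basis N L M d c}"
      using semi_basis_cat_vac_iff[OF N L dvd_n] by (simp add: fin_basis_def)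
  next
    fix c
    assume "c \<in> {c. semi_basis N L M d c}"
    then have sb: "semi_basis N L M d c" by simp
    then have "\<forall>i\<ge>n. c i = M - int i"
      using semi_basis_vacuum_tail[OF N L dvd _ d] by (simp add: n_def)
    then have c: "c = cat_vac (map c [0..<n]) (M - int n)" by (simp add: cat_vac_map)
    then have "fin_basis N L M n d (map c [0..<n])"
      using sb semi_basis_cat_vac_iff[OF N L dvd_n, of "map c [0..<n]"] by simp
    with c show "c \<in> (\<lambda>ks. cat_vac ks (M - int n)) ` {ks. fin_basis N L M n d ks}" by blast
  qed
qed

lemma Vsp_eq_finsupp_on: "Vsp N L M n d = finsupp_on {ks. fin_basis N L M n d ks}"
  by (simp add: Vsp_def finsupp_on_def)

lemma Fsp_eq_finsupp_on: "Fsp N L M d = finsupp_on {c. semi_basis N L M d c}"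
  by (simp add: Fsp_def finsupp_on_def)

lemma rho_eq_push_coeffs:
  assumes N: "N \<ge> 1" and L: "L \<ge> 1" and dvd: "int N * int L dvd M - int n"
    and v: "v \<in> Vsp N L M n d"
  shows "rho M n v = push_coeffs (\<lambda>ks. cat_vac ks (M - int n)) {ks. fin_basis N L M n d ks} v"
proof
  fix b
  let ?B = "{ks. fin_basis N L M n d ks}"
  have v': "v \<in> finsupp_on ?B" using v by (simp add: Vsp_eq_finsupp_on)
  have "swedge (cat_vac ks (M - int n)) = (\<lambda>b. if b = cat_vac ks (M - int n) then 1 else 0)"
    if "ks \<in> ?B" for ks
  proof -
    have fb: "fin_basis N L M n d ks" using that by simp
    have "\<forall>k\<in>set ks. M - int n < k" using fin_basis_gt[OF N L dvd fb] by blast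
    with fb show ?thesis
      by (intro swedge_strict_dec cat_vac_strict_dec) (simp_all add: fin_basis_def)
  qed
  then show "rho M n v b = push_coeffs (\<lambda>ks. cat_vac ks (M - int n)) ?B v b"
    using v' sum_indicator_eq_push_coeffs[OF inj_on_cat_vac_fin_basis v'] unfolding rho_def
    by (auto simp: finsupp_on_def intro!: sum.cong)
qed

theorem proposition3p3:
  fixes N L s l d :: nat and M :: int
  assumes "N \<ge> 2" and "L \<ge> 2"
    and "s < N * L" and "[M = int s] (mod int (N * L))"
    and "d \<le> l"
  shows "(\<forall>v \<in> Vsp N L M (s + l * N * L) (int d).
            rho M (s + l * N * L) v \<in> Fsp N L M (int d))
       \<and> (\<forall>a v w. v \<in> Vsp N L M (s + l * N * L) (int d) \<longrightarrow> w \<in> Vsp N L M (s + l * N * L) (int d) \<longrightarrow>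
            rho M (s + l * N * L) (\<lambda>x. a * v x + w x)
              = (\<lambda>b. a * rho M (s + l * N * L) v b + rho M (s + l * N * L) w b))
       \<and> bij_betw (rho M (s + l * N * L)) (Vsp N L M (s + l * N * L) (int d)) (Fsp N L M (int d))"
proof -
  define n where "n = s + l * N * L"
  define e where "e = (\<lambda>ks. cat_vac ks (M - int n))"
  define B where "B = {ks. fin_basis N L M n (int d) ks}"
  have N: "N \<ge> 1" and L: "L \<ge> 1" using assms(1,2) by simp_all
  have dvd: "int N * int L dvd M - int s" using assms(4) by (simp add: cong_iff_dvd_diff)
  have inj: "inj_on e B"
    unfolding e_def B_def by (rule inj_on_cat_vac_fin_basis)
  have V: "Vsp N L M n (int d) = finsupp_on B" by (simp add: Vsp_eq_finsupp_on B_def)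
  have F: "Fsp N L M (int d) = finsupp_on (e ` B)"
    using cat_vac_image_fin_basis[OF N L dvd, of "int d" l] assms(5)
    by (simp add: Fsp_eq_finsupp_on e_def B_def n_def)
  have dvd_n: "int N * int L dvd M - int n" unfolding n_def by (rule dvd_diff_add_mult[OF dvd])
  have rho: "rho M n v = push_coeffs e B v" if "v \<in> finsupp_on B" for v
    using rho_eq_push_coeffs[OF N L dvd_n, of v "int d"] that by (simp add: V e_def B_def)
  have lin: "rho M n (\<lambda>x. a * v x + w x) = (\<lambda>b. a * rho M n v b + rho M n w b)"
    if "v \<in> finsupp_on B" "w \<in> finsupp_on B" for a v w
    using that by (simp add: rho finsupp_on_lincomb push_coeffs_lincomb)
  have "bij_betw (rho M n) (finsupp_on B) (finsupp_on (e ` B))"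
    using bij_betw_cong[of _ "rho M n" "push_coeffs e B"] rho bij_betw_push_coeffs[OF inj] by blast
  then show ?thesis
    unfolding n_def[symmetric] V F using rho push_coeffs_in_finsupp_on[OF inj] lin by auto
qed

end
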